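(* Let $T^1\subseteq T^2\subseteq T$ with $T^2\setminus T^1=\{r\}$ a singleton, let $\mathbf{z}^1$ be an optimal solution of ODMTS-DFD$(T^1)$ and $\mathbf{z}^2$ an optimal solution of ODMTS-DFD$(T^2)$. Then $g^r(\mathbf{z}^2)\le g^r(\mathbf{z}^1)$.
   Context: Let $N$ be a finite set of nodes and $H \subseteq N$ a set of hubs. An ODMTS design is a vector $\mathbf{z}=(z_{hl})_{h,l\in H}\in\{0,1\}^{H\times H}$ satisfying $\sum_{l\in H} z_{hl}=\sum_{l\in H} z_{lh}$ for all $h\in H$; opening arc $(h,l)$ costs $\beta_{hl}$. Let $T$ be a finite set of trips; trip $r$ has origin $or^r\in N$, destination $de^r\in N$, number of riders $p^r> 0$, and cost coefficients $\tau^r_{hl}$ ($h,l\in H$) and $\gamma^r_{ij}$ ($i,j\in N$); $t_{hl}, t^{wait}_{hl}$ are bus travel and waiting times and $t_{ij}$ shuttle travel times. Given a design $\mathbf{z}$, a route for $r$ is a pair of binary vectors $x^r\in\{0,1\}^{H\times H}$, $y^r\in\{0,1\}^{N\times N}$ with $x^r_{hl}\le z_{hl}$ and, for every $i\in N$, $\sum_{h\in H}(x^r_{ih}-x^r_{hi})\,[\text{if } i\in H] + \sum_{j\in N}(y^r_{ij}-y^r_{ji})$ equal to $1$ if $i=or^r$, $-1$ if $i=de^r$, and $0$ otherwise. Its cost is $g^r=\sum_{h,l}\tau^r_{hl}x^r_{hl}+\sum_{i,j}\gamma^r_{ij}y^r_{ij}$ and its travel time is $f^r=\sum_{h,l}(t_{hl}+t^{wait}_{hl})x^r_{hl}+\sum_{i,j}t_{ij}y^r_{ij}$.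 The route of $r$ under $\mathbf{z}$ is a route minimizing $(g^r,f^r)$ lexicographically; $g^r(\mathbf{z})$ denotes its cost. For $\hat T\subseteq T$, ODMTS-DFD$(\hat T)$ is the problem of minimizing $\sum_{h,l\in H}\beta_{hl}z_{hl}+\sum_{r\in\hat T}p^r g^r(\mathbf{z})$ over designs $\mathbf{z}$. *)

theory Defs
  imports Complex_Main
begin

text \<open>Binary vectors indexed by H x H or N x N are modelled as real-valued functions
  whose values on the relevant index set lie in {0,1}; values outside the index set
  are irrelevant (never used).\<close>

definition is_design :: "'n set \<Rightarrow> ('n \<Rightarrow> 'n \<Rightarrow> real) \<Rightarrow> bool" where
  "is_design H z \<longleftrightarrow>
     (\<forall>h\<in>H. \<forall>l\<in>H. z h l \<in> {0, 1}) \<and>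
     (\<forall>h\<in>H. (\<Sum>l\<in>H. z h l) = (\<Sum>l\<in>H. z l h))"

definition is_route :: "'n set \<Rightarrow> 'n set \<Rightarrow> ('n \<Rightarrow> 'n \<Rightarrow> real) \<Rightarrow> 'n \<Rightarrow> 'n
    \<Rightarrow> ('n \<Rightarrow> 'n \<Rightarrow> real) \<Rightarrow> ('n \<Rightarrow> 'n \<Rightarrow> real) \<Rightarrow> bool" where
  "is_route N H z orig dest x y \<longleftrightarrow>
     (\<forall>h\<in>H. \<forall>l\<in>H. x h l \<in> {0, 1}) \<and>
     (\<forall>i\<in>N. \<forall>j\<in>N. y i j \<in> {0, 1}) \<and>
     (\<forall>h\<in>H. \<forall>l\<in>H. x h l \<le> z h l) \<and>
     (\<forall>i\<in>N. (if i \<in> H then (\<Sum>h\<in>H. x i h - x h i) else 0) + (\<Sum>j\<in>N. y i j - y j i)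
        = (if i = orig then 1 else if i = dest then -1 else 0))"

definition route_cost :: "'n set \<Rightarrow> 'n set \<Rightarrow> ('n \<Rightarrow> 'n \<Rightarrow> real) \<Rightarrow> ('n \<Rightarrow> 'n \<Rightarrow> real)
    \<Rightarrow> ('n \<Rightarrow> 'n \<Rightarrow> real) \<Rightarrow> ('n \<Rightarrow> 'n \<Rightarrow> real) \<Rightarrow> real" where
  "route_cost N H tau gamma x y =
     (\<Sum>h\<in>H. \<Sum>l\<in>H. tau h l * x h l) + (\<Sum>i\<in>N. \<Sum>j\<in>N. gamma i j * y i j)"

definition route_time :: "'n set \<Rightarrow> 'n set \<Rightarrow> ('n \<Rightarrow> 'n \<Rightarrow> real) \<Rightarrow> ('n \<Rightarrow> 'n \<Rightarrow> real)
    \<Rightarrow> ('n \<Rightarrow> 'n \<Rightarrow> real) \<Rightarrow> ('n \<Rightarrow> 'n \<Rightarrow> real) \<Rightarrow> ('n \<Rightarrow> 'n \<Rightarrow> real) \<Rightarrow> real" where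
  "route_time N H tbus twait tsh x y =
     (\<Sum>h\<in>H. \<Sum>l\<in>H. (tbus h l + twait h l) * x h l) + (\<Sum>i\<in>N. \<Sum>j\<in>N. tsh i j * y i j)"

definition lex_opt_route where
  "lex_opt_route N H tbus twait tsh orig dest tau gamma z r x y \<longleftrightarrow>
     is_route N H z (orig r) (dest r) x y \<and>
     (\<forall>x' y'. is_route N H z (orig r) (dest r) x' y' \<longrightarrow>
        route_cost N H (tau r) (gamma r) x y < route_cost N H (tau r) (gamma r) x' y' \<or>
        (route_cost N H (tau r) (gamma r) x y = route_cost N H (tau r) (gamma r) x' y' \<and>
         route_time N H tbus twait tsh x y \<le> route_time N H tbus twait tsh x' y'))"

definition trip_cost where
  "trip_cost N H tbus twait tsh orig dest tau gamma z r =
     (let xy = (SOME (x, y). lex_opt_route N H tbus twait tsh orig dest tau gamma z r x y)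
      in route_cost N H (tau r) (gamma r) (fst xy) (snd xy))"

definition dfd_obj where
  "dfd_obj N H beta tbus twait tsh orig dest p tau gamma Ts z =
     (\<Sum>h\<in>H. \<Sum>l\<in>H. beta h l * z h l) +
     (\<Sum>r\<in>Ts. p r * trip_cost N H tbus twait tsh orig dest tau gamma z r)"

definition dfd_optimal where
  "dfd_optimal N H beta tbus twait tsh orig dest p tau gamma Ts z \<longleftrightarrow>
     is_design H z \<and>
     (\<forall>z'. is_design H z' \<longrightarrow>
        dfd_obj N H beta tbus twait tsh orig dest p tau gamma Ts z
          \<le> dfd_obj N H beta tbus twait tsh orig dest p tau gamma Ts z')"

end

theory Submission
  imports Defs
begin

text \<open>An exchange argument that uses nothing about routes: \<open>z\<^sup>1\<close> minimises the
  objective \<open>F\<close> of \<open>T\<^sup>1\<close>, while \<open>z\<^sup>2\<close> minimises \<open>F + p\<^sup>r g\<^sup>r\<close>. Adding the two optimality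
  inequalities cancels \<open>F\<close> and leaves \<open>p\<^sup>r g\<^sup>r(z\<^sup>2) \<le> p\<^sup>r g\<^sup>r(z\<^sup>1)\<close>; divide by \<open>p\<^sup>r > 0\<close>.\<close>

lemma minimizer_of_perturbation_decreases_perturbation:
  fixes F G :: "'a \<Rightarrow> real"
  assumes "F x1 \<le> F x2" and "F x2 + c * G x2 \<le> F x1 + c * G x1" and "c > 0"
  shows "G x2 \<le> G x1"
proof -
  from assms(1,2) have "c * G x2 \<le> c * G x1" by linarith
  with \<open>c > 0\<close> show ?thesis by simp
qed

lemma dfd_obj_insert:
  assumes "finite Ts" and "r \<notin> Ts"
  shows "dfd_obj N H beta tbus twait tsh orig dest p tau gamma (insert r Ts) z
       = dfd_obj N H beta tbus twait tsh orig dest p tau gamma Ts z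
         + p r * trip_cost N H tbus twait tsh orig dest tau gamma z r"
  using assms by (simp add: dfd_obj_def)

lemma dfd_optimal_is_design:
  "dfd_optimal N H beta tbus twait tsh orig dest p tau gamma Ts z \<Longrightarrow> is_design H z"
  unfolding dfd_optimal_def by blast

lemma dfd_optimal_le:
  assumes "dfd_optimal N H beta tbus twait tsh orig dest p tau gamma Ts z" and "is_design H z'"
  shows "dfd_obj N H beta tbus twait tsh orig dest p tau gamma Ts z
       \<le> dfd_obj N H beta tbus twait tsh orig dest p tau gamma Ts z'"
  using assms unfolding dfd_optimal_def by blast

theorem mainTheorem4:
  fixes N H :: "'n set" and T T1 T2 :: "'t set"
    and beta tbus twait tsh :: "'n \<Rightarrow> 'n \<Rightarrow> real"
    and orig dest :: "'t \<Rightarrow> 'n" and p :: "'t \<Rightarrow> real"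
    and tau gamma :: "'t \<Rightarrow> 'n \<Rightarrow> 'n \<Rightarrow> real"
    and z1 z2 :: "'n \<Rightarrow> 'n \<Rightarrow> real" and r :: 't
  assumes "finite N" and "H \<subseteq> N" and "finite T"
    and "\<forall>s\<in>T. orig s \<in> N \<and> dest s \<in> N \<and> p s > 0"
    and "T1 \<subseteq> T2" and "T2 \<subseteq> T" and "T2 - T1 = {r}"
    and "dfd_optimal N H beta tbus twait tsh orig dest p tau gamma T1 z1"
    and "dfd_optimal N H beta tbus twait tsh orig dest p tau gamma T2 z2"
  shows "trip_cost N H tbus twait tsh orig dest tau gamma z2 r
           \<le> trip_cost N H tbus twait tsh orig dest tau gamma z1 r"
proof -
  let ?F = "dfd_obj N H beta tbus twait tsh orig dest p tau gamma T1"
  let ?g = "\<lambda>z. trip_cost N H tbus twait tsh orig dest tau gamma z r"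
  have T2_eq: "T2 = insert r T1" and r_new: "r \<notin> T1"
    using \<open>T1 \<subseteq> T2\<close> \<open>T2 - T1 = {r}\<close> by auto
  have "finite T1" using \<open>finite T\<close> \<open>T1 \<subseteq> T2\<close> \<open>T2 \<subseteq> T\<close> finite_subset by blast
  have "p r > 0" using assms(4) \<open>T2 \<subseteq> T\<close> T2_eq by auto
  have "?F z1 \<le> ?F z2"
    using assms(8) dfd_optimal_is_design[OF assms(9)] by (rule dfd_optimal_le)
  moreover have "?F z2 + p r * ?g z2 \<le> ?F z1 + p r * ?g z1"
    using dfd_optimal_le[OF assms(9) dfd_optimal_is_design[OF assms(8)]]
    by (simp add: T2_eq dfd_obj_insert[OF \<open>finite T1\<close> r_new])
  ultimately show ?thesis
    using \<open>p r > 0\<close>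
    by (rule minimizer_of_perturbation_decreases_perturbation[where F = ?F and G = ?g])
qed

end
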